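(* Let $\kappa$ be a finite field of characteristic $\neq 2$, let $F = \kappa(u)$, and fix $t \in F$ with $t \notin \kappa$. Let $E_t$ be the elliptic curve over $F$ given by $y^2 = x^3 + t x^2 - t^3 x$. For every place $v$ of $F$ (with normalized valuation also denoted $v$), the reduction type of $E_t$ at $v$ is: - if $v(t) > 0$ and $v(t)$ is even: multiplicative; - if $v(t) > 0$ and $v(t)$ is odd: additive (and potentially multiplicative); - if $v(t) < 0$ and $v(t) \equiv 0 \bmod 4$: good; - if $v(t) < 0$ and $v(t) \not\equiv 0 \bmod 4$: additive (and potentially good); - if $v(t) = 0$ and $v(1+4t) = 0$: good; - if $v(t) = 0$ and $v(1+4t) > 0$: multiplicative. *)

theory Defs
  imports "HOL-Computational_Algebra.Polynomial_Factorial"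
begin

text \<open>The rational function field in one variable over a field kappa is the fraction
field of the polynomial ring: the type 'k poly fract.  The constant field kappa is
embedded via constant polynomials.\<close>

definition const_fn :: "'k::field \<Rightarrow> 'k poly fract" where
  "const_fn c = to_fract [:c:]"

text \<open>A place v of F/kappa, identified with its normalized (surjective, Z-valued)
discrete valuation, trivial on the constant field kappa.  The value at 0 (which is
+infinity mathematically) is irrelevant: all statements only use v on nonzero elements.\<close>

definition normalized_place :: "('k::field poly fract \<Rightarrow> int) \<Rightarrow> bool" where
  "normalized_place v \<longleftrightarrow>
     (\<forall>x y. x \<noteq> 0 \<longrightarrow> y \<noteq> 0 \<longrightarrow> v (x * y) = v x + v y) \<and>
     (\<forall>x y. x \<noteq> 0 \<longrightarrow> y \<noteq> 0 \<longrightarrow> x + y \<noteq> 0 \<longrightarrow> v (x + y) \<ge> min (v x) (v y)) \<and>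
     (\<forall>c. c \<noteq> 0 \<longrightarrow> v (const_fn c) = 0) \<and>
     (\<exists>x. x \<noteq> 0 \<and> v x = 1)"

text \<open>Integrality at v (0 counts as integral, v(0) = +infinity).\<close>
definition v_integral :: "('a::zero \<Rightarrow> int) \<Rightarrow> 'a \<Rightarrow> bool" where
  "v_integral v x \<longleftrightarrow> x = 0 \<or> v x \<ge> 0"

text \<open>A Weierstrass equation y^2 + a1 x y + a3 y = x^3 + a2 x^2 + a4 x + a6 is
given by its coefficient tuple (a1, a2, a3, a4, a6).\<close>

type_synonym 'a weq = "'a \<times> 'a \<times> 'a \<times> 'a \<times> 'a"

fun w_b2 :: "'a::comm_ring_1 weq \<Rightarrow> 'a" where
  "w_b2 (a1, a2, a3, a4, a6) = a1^2 + 4*a2"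
fun w_b4 :: "'a::comm_ring_1 weq \<Rightarrow> 'a" where
  "w_b4 (a1, a2, a3, a4, a6) = 2*a4 + a1*a3"
fun w_b6 :: "'a::comm_ring_1 weq \<Rightarrow> 'a" where
  "w_b6 (a1, a2, a3, a4, a6) = a3^2 + 4*a6"
fun w_b8 :: "'a::comm_ring_1 weq \<Rightarrow> 'a" where
  "w_b8 (a1, a2, a3, a4, a6) =
     a1^2*a6 + 4*a2*a6 - a1*a3*a4 + a2*a3^2 - a4^2"

definition w_c4 :: "'a::comm_ring_1 weq \<Rightarrow> 'a" where
  "w_c4 E = (w_b2 E)^2 - 24 * w_b4 E"

definition w_disc :: "'a::comm_ring_1 weq \<Rightarrow> 'a" where
  "w_disc E = - ((w_b2 E)^2 * w_b8 E) - 8 * (w_b4 E)^3 - 27 * (w_b6 E)^2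
              + 9 * w_b2 E * w_b4 E * w_b6 E"

definition w_j :: "'a::field weq \<Rightarrow> 'a" where
  "w_j E = (w_c4 E)^3 / w_disc E"

text \<open>Admissible change of variables x = u^2 x' + r, y = u^3 y' + s u^2 x' + w
(Silverman, Table 3.1).\<close>

fun change_coords :: "'a::field weq \<Rightarrow> 'a \<Rightarrow> 'a \<Rightarrow> 'a \<Rightarrow> 'a \<Rightarrow> 'a weq" where
  "change_coords (a1, a2, a3, a4, a6) u r s w =
     ((a1 + 2*s) / u,
      (a2 - s*a1 + 3*r - s^2) / u^2,
      (a3 + r*a1 + 2*w) / u^3,
      (a4 - s*a3 + 2*r*a2 - (w + r*s)*a1 + 3*r^2 - 2*s*w) / u^4,
      (a6 + r*a4 + r^2*a2 + r^3 - w*a3 - w^2 - r*w*a1) / u^6)"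

definition integral_weq :: "('a::zero \<Rightarrow> int) \<Rightarrow> 'a weq \<Rightarrow> bool" where
  "integral_weq v E \<longleftrightarrow> (case E of (a1, a2, a3, a4, a6) \<Rightarrow>
      v_integral v a1 \<and> v_integral v a2 \<and> v_integral v a3 \<and> v_integral v a4 \<and> v_integral v a6)"

definition integral_model :: "('a::field \<Rightarrow> int) \<Rightarrow> 'a weq \<Rightarrow> 'a weq \<Rightarrow> bool" where
  "integral_model v E E' \<longleftrightarrow>
     (\<exists>u r s w. u \<noteq> 0 \<and> E' = change_coords E u r s w) \<and> integral_weq v E'"

definition minimal_model :: "('a::field \<Rightarrow> int) \<Rightarrow> 'a weq \<Rightarrow> 'a weq \<Rightarrow> bool" where
  "minimal_model v E E' \<longleftrightarrow> integral_model v E E' \<and>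
     (\<forall>E''. integral_model v E E'' \<longrightarrow> v (w_disc E') \<le> v (w_disc E''))"

text \<open>Reduction type of E at v, read off from a minimal model (Silverman VII.5):
good iff v(Disc_min) = 0; multiplicative iff v(Disc_min) > 0 and v(c4_min) = 0;
additive iff v(Disc_min) > 0 and v(c4_min) > 0 (c4_min = 0 counts as v = +infinity).\<close>

definition good_reduction :: "('a::field \<Rightarrow> int) \<Rightarrow> 'a weq \<Rightarrow> bool" where
  "good_reduction v E \<longleftrightarrow>
     (\<exists>E'. minimal_model v E E' \<and> v (w_disc E') = 0)"

definition multiplicative_reduction :: "('a::field \<Rightarrow> int) \<Rightarrow> 'a weq \<Rightarrow> bool" where
  "multiplicative_reduction v E \<longleftrightarrow>
     (\<exists>E'. minimal_model v E E' \<and> v (w_disc E') > 0 \<and> w_c4 E' \<noteq> 0 \<and> v (w_c4 E') = 0)"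

definition additive_reduction :: "('a::field \<Rightarrow> int) \<Rightarrow> 'a weq \<Rightarrow> bool" where
  "additive_reduction v E \<longleftrightarrow>
     (\<exists>E'. minimal_model v E E' \<and> v (w_disc E') > 0 \<and> (w_c4 E' = 0 \<or> v (w_c4 E') > 0))"

text \<open>Potentially good / potentially multiplicative reduction, via the j-invariant
(Silverman Prop. VII.5.5): potentially good iff j is v-integral,
potentially multiplicative iff v(j) < 0.\<close>

definition potentially_good_reduction :: "('a::field \<Rightarrow> int) \<Rightarrow> 'a weq \<Rightarrow> bool" where
  "potentially_good_reduction v E \<longleftrightarrow> v_integral v (w_j E)"

definition potentially_multiplicative_reduction :: "('a::field \<Rightarrow> int) \<Rightarrow> 'a weq \<Rightarrow> bool" where
  "potentially_multiplicative_reduction v E \<longleftrightarrow> w_j E \<noteq> 0 \<and> v (w_j E) < 0"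

definition E_curve :: "'a::comm_ring_1 \<Rightarrow> 'a weq" where
  "E_curve t = (0, t, 0, - (t^3), 0)"

end

theory Submission
  imports Defs
begin

text \<open>A scaling x = u^2 x', y = u^3 y' divides Disc by u^12 and c4 by u^4, and translations
leave both unchanged. For E_t one has Disc = 16 t^8 (1 + 4t) and c4 = 16 t^2 (1 + 3t), and
the scaled model (0, t/u^2, 0, -t^3/u^4, 0) is integral as long as 2 v(u) \<le> v(t) and
4 v(u) \<le> 3 v(t). Taking v(u) as large as allowed yields in every case a model with
v(Disc) < 12 or v(c4) < 4, which no further integral scaling can improve, so it is
minimal and the reduction type can be read off v(Disc) and v(c4); the potential type
follows from v(j) = 3 v(c4) - v(Disc).\<close>

lemma w_disc_translate:
  fixes a1 a2 a3 a4 a6 :: "'a::field"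
  shows "w_disc (change_coords (a1, a2, a3, a4, a6) 1 r s w) = w_disc (a1, a2, a3, a4, a6)"
  unfolding w_disc_def by simp algebra

lemma w_c4_translate:
  fixes a1 a2 a3 a4 a6 :: "'a::field"
  shows "w_c4 (change_coords (a1, a2, a3, a4, a6) 1 r s w) = w_c4 (a1, a2, a3, a4, a6)"
  unfolding w_c4_def by simp algebra

lemma w_disc_weighted_scale:
  fixes a1 a2 a3 a4 a6 :: "'a::field"
  shows "w_disc (u*a1, u^2*a2, u^3*a3, u^4*a4, u^6*a6) = u^12 * w_disc (a1, a2, a3, a4, a6)"
  unfolding w_disc_def by simp algebra

lemma w_c4_weighted_scale:
  fixes a1 a2 a3 a4 a6 :: "'a::field"
  shows "w_c4 (u*a1, u^2*a2, u^3*a3, u^4*a4, u^6*a6) = u^4 * w_c4 (a1, a2, a3, a4, a6)"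
  unfolding w_c4_def by simp algebra

lemma change_coords_decompose:
  "change_coords E u r s w = change_coords (change_coords E 1 r s w) u 0 0 0"
  by (cases E) simp

lemma change_coords_scale_inverse:
  fixes E :: "'a::field weq"
  assumes "u \<noteq> 0" "change_coords E u 0 0 0 = (b1, b2, b3, b4, b6)"
  shows "E = (u*b1, u^2*b2, u^3*b3, u^4*b4, u^6*b6)"
  using assms by (cases E) auto

lemma w_disc_change_coords:
  fixes E :: "'a::field weq"
  assumes "u \<noteq> 0"
  shows "w_disc (change_coords E u r s w) = w_disc E / u^12"
proof -
  let ?T = "change_coords E 1 r s w"
  obtain b1 b2 b3 b4 b6 where b: "change_coords ?T u 0 0 0 = (b1, b2, b3, b4, b6)"
    by (metis prod_cases5)
  have "w_disc E = w_disc ?T"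
    by (cases E) (simp only: w_disc_translate)
  also have "\<dots> = u^12 * w_disc (change_coords ?T u 0 0 0)"
    using change_coords_scale_inverse[OF assms b] w_disc_weighted_scale b by metis
  also have "change_coords ?T u 0 0 0 = change_coords E u r s w"
    by (rule change_coords_decompose[symmetric])
  finally show ?thesis
    using assms by (simp add: field_simps)
qed

lemma w_c4_change_coords:
  fixes E :: "'a::field weq"
  assumes "u \<noteq> 0"
  shows "w_c4 (change_coords E u r s w) = w_c4 E / u^4"
proof -
  let ?T = "change_coords E 1 r s w"
  obtain b1 b2 b3 b4 b6 where b: "change_coords ?T u 0 0 0 = (b1, b2, b3, b4, b6)"
    by (metis prod_cases5)
  have "w_c4 E = w_c4 ?T"
    by (cases E) (simp only: w_c4_translate)
  also have "\<dots> = u^4 * w_c4 (change_coords ?T u 0 0 0)"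
    using change_coords_scale_inverse[OF assms b] w_c4_weighted_scale b by metis
  also have "change_coords ?T u 0 0 0 = change_coords E u r s w"
    by (rule change_coords_decompose[symmetric])
  finally show ?thesis
    using assms by (simp add: field_simps)
qed

lemma w_disc_E_curve: "w_disc (E_curve t) = 16 * t^8 * (1 + 4*t)"
  unfolding w_disc_def E_curve_def by (simp add: algebra_simps power_def eval_nat_numeral)

lemma w_c4_E_curve: "w_c4 (E_curve t) = 16 * t^2 * (1 + 3*t)"
  unfolding w_c4_def E_curve_def by (simp add: algebra_simps eval_nat_numeral)

lemma change_coords_E_curve_scale:
  "change_coords (E_curve t) u 0 0 0 = (0, t / u^2, 0, - (t^3) / u^4, 0)"
  unfolding E_curve_def by simp

text \<open>A normalized place without the condition that it vanishes on constants; that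
condition is only used to know v(2) = 0.\<close>

locale discrete_valuation =
  fixes v :: "'a::field \<Rightarrow> int"
  assumes v_mult: "x \<noteq> 0 \<Longrightarrow> y \<noteq> 0 \<Longrightarrow> v (x * y) = v x + v y"
    and v_add_ge_min: "x \<noteq> 0 \<Longrightarrow> y \<noteq> 0 \<Longrightarrow> x + y \<noteq> 0 \<Longrightarrow> min (v x) (v y) \<le> v (x + y)"
    and uniformizer_exists: "\<exists>x. x \<noteq> 0 \<and> v x = 1"
begin

lemma v_one [simp]: "v 1 = 0"
  using v_mult[of 1 1] by simp

lemma v_minus_one: "v (-1) = 0"
  using v_mult[of "-1" "-1"] by simp

lemma v_uminus: "x \<noteq> 0 \<Longrightarrow> v (- x) = v x"
  using v_mult[of "-1" x] v_minus_one by simp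

lemma v_inverse: "x \<noteq> 0 \<Longrightarrow> v (inverse x) = - v x"
  using v_mult[of x "inverse x"] by simp

lemma v_divide: "x \<noteq> 0 \<Longrightarrow> y \<noteq> 0 \<Longrightarrow> v (x / y) = v x - v y"
  by (simp add: divide_inverse v_mult v_inverse)

lemma v_power: "x \<noteq> 0 \<Longrightarrow> v (x ^ n) = int n * v x"
  by (induction n) (simp_all add: v_mult algebra_simps)

lemma v_add_eq_left:
  assumes "x \<noteq> 0" "y \<noteq> 0" "v x < v y"
  shows "x + y \<noteq> 0 \<and> v (x + y) = v x"
proof -
  have sum_nonzero: "x + y \<noteq> 0"
  proof
    assume "x + y = 0"
    then have "x = - y" by (simp add: eq_neg_iff_add_eq_0)
    with assms show False by (simp add: v_uminus)
  qed
  have "min (v x) (v y) \<le> v (x + y)"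
    using v_add_ge_min assms sum_nonzero by blast
  moreover have "min (v (x + y)) (v (- y)) \<le> v x"
    using v_add_ge_min[OF sum_nonzero, of "- y"] assms by simp
  ultimately show ?thesis
    using assms sum_nonzero v_uminus[OF assms(2)] by linarith
qed

lemma v_value_exists: "\<exists>x. x \<noteq> 0 \<and> v x = k"
proof -
  obtain p where p: "p \<noteq> 0" "v p = 1"
    using uniformizer_exists by blast
  show ?thesis
  proof (cases "k \<ge> 0")
    case True
    then show ?thesis
      using p v_power[of p "nat k"] by (intro exI[of _ "p ^ nat k"]) simp
  next
    case False
    then show ?thesis
      using p v_power[of p "nat (- k)"] v_inverse[of "p ^ nat (- k)"]
      by (intro exI[of _ "inverse (p ^ nat (- k))"]) simp
  qed
qed

lemma v_integral_zero: "v_integral v 0"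
  by (simp add: v_integral_def)

lemma v_integral_one: "v_integral v 1"
  by (simp add: v_integral_def)

lemma v_integral_add: "v_integral v x \<Longrightarrow> v_integral v y \<Longrightarrow> v_integral v (x + y)"
  unfolding v_integral_def by (metis add.commute add_0 min_def order_trans v_add_ge_min)

lemma v_integral_mult: "v_integral v x \<Longrightarrow> v_integral v y \<Longrightarrow> v_integral v (x * y)"
  unfolding v_integral_def using v_mult by force

lemma v_integral_uminus: "v_integral v x \<Longrightarrow> v_integral v (- x)"
  unfolding v_integral_def using v_uminus by force

lemma v_integral_diff: "v_integral v x \<Longrightarrow> v_integral v y \<Longrightarrow> v_integral v (x - y)"
  using v_integral_add[of x "- y"] v_integral_uminus[of y] by simp

lemma v_integral_power: "v_integral v x \<Longrightarrow> v_integral v (x ^ n)"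
  by (induction n) (simp_all add: v_integral_one v_integral_mult)

lemma v_integral_of_nat: "v_integral v (of_nat n)"
  by (induction n) (simp_all add: v_integral_zero v_integral_one v_integral_add)

lemma v_integral_numeral: "v_integral v (numeral n)"
  using v_integral_of_nat[of "numeral n"] by simp

lemmas v_integral_ring_closed =
  v_integral_add v_integral_mult v_integral_uminus v_integral_diff v_integral_power
  v_integral_numeral

lemma integral_weq_w_c4_w_disc:
  assumes "integral_weq v E"
  shows "v_integral v (w_c4 E)" "v_integral v (w_disc E)"
proof -
  obtain a1 a2 a3 a4 a6 where E: "E = (a1, a2, a3, a4, a6)"
    by (metis prod_cases5)
  have "v_integral v a1" "v_integral v a2" "v_integral v a3" "v_integral v a4" "v_integral v a6"
    using assms unfolding E integral_weq_def by auto
  then show "v_integral v (w_c4 E)" "v_integral v (w_disc E)"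
    unfolding E w_c4_def w_disc_def by (simp; intro v_integral_ring_closed)+
qed

lemma v_w_disc_change_coords:
  assumes "w_disc E \<noteq> 0" "u \<noteq> 0"
  shows "w_disc (change_coords E u r s w) \<noteq> 0"
    "v (w_disc (change_coords E u r s w)) = v (w_disc E) - 12 * v u"
  using assms by (simp_all add: w_disc_change_coords v_divide v_power)

lemma v_w_c4_change_coords:
  assumes "w_c4 E \<noteq> 0" "u \<noteq> 0"
  shows "w_c4 (change_coords E u r s w) \<noteq> 0"
    "v (w_c4 (change_coords E u r s w)) = v (w_c4 E) - 4 * v u"
  using assms by (simp_all add: w_c4_change_coords v_divide v_power)

lemma v_w_j:
  assumes "w_disc E \<noteq> 0" "w_c4 E \<noteq> 0"
  shows "w_j E \<noteq> 0" "v (w_j E) = 3 * v (w_c4 E) - v (w_disc E)"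
  using assms by (simp_all add: w_j_def v_divide v_power)

text \<open>Two integral models differ by a scaling u with v(u) an integer, which moves v(Disc)
by 12 v(u) and v(c4) by 4 v(u); both valuations stay nonnegative.\<close>

lemma minimal_model_if_small:
  assumes disc: "w_disc E \<noteq> 0" and model: "integral_model v E E'"
    and small: "v (w_disc E') < 12 \<or> (w_c4 E' \<noteq> 0 \<and> v (w_c4 E') < 4)"
  shows "minimal_model v E E'"
  unfolding minimal_model_def
proof (intro conjI allI impI model)
  fix E'' assume "integral_model v E E''"
  then obtain u r s w where u: "u \<noteq> 0" and E'': "E'' = change_coords E u r s w"
    and integral'': "integral_weq v E''"
    unfolding integral_model_def by blast
  obtain u' r' s' w' where u': "u' \<noteq> 0" and E': "E' = change_coords E u' r' s' w'"
    using model unfolding integral_model_def by blast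
  have disc'': "v (w_disc E'') = v (w_disc E) - 12 * v u" "v (w_disc E'') \<ge> 0"
    using v_w_disc_change_coords[OF disc u] integral_weq_w_c4_w_disc(2)[OF integral'']
    by (simp_all add: E'' v_integral_def)
  have disc': "v (w_disc E') = v (w_disc E) - 12 * v u'"
    using v_w_disc_change_coords[OF disc u'] by (simp add: E')
  have "v u \<le> v u'"
    using small
  proof
    assume "v (w_disc E') < 12"
    then show ?thesis using disc'' disc' by linarith
  next
    assume c4: "w_c4 E' \<noteq> 0 \<and> v (w_c4 E') < 4"
    then have "w_c4 E \<noteq> 0"
      using E' u' by (auto simp: w_c4_change_coords)
    then have "v (w_c4 E'') = v (w_c4 E) - 4 * v u" "v (w_c4 E'') \<ge> 0"
      "v (w_c4 E') = v (w_c4 E) - 4 * v u'"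
      using v_w_c4_change_coords u u' integral_weq_w_c4_w_disc(1)[OF integral'']
      by (simp_all add: E'' E' v_integral_def)
    with c4 show ?thesis by linarith
  qed
  then show "v (w_disc E') \<le> v (w_disc E'')"
    using disc'' disc' by linarith
qed

lemma good_reduction_if_integral_model:
  assumes "w_disc E \<noteq> 0" "integral_model v E E'" "v (w_disc E') = 0"
  shows "good_reduction v E"
  using assms minimal_model_if_small unfolding good_reduction_def by fastforce

lemma multiplicative_reduction_if_integral_model:
  assumes "w_disc E \<noteq> 0" "integral_model v E E'"
    and "v (w_disc E') > 0" "w_c4 E' \<noteq> 0" "v (w_c4 E') = 0"
  shows "multiplicative_reduction v E"
  using assms minimal_model_if_small unfolding multiplicative_reduction_def by fastforce

lemma additive_reduction_if_integral_model:
  assumes "w_disc E \<noteq> 0" "integral_model v E E'"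
    and "v (w_disc E') < 12 \<or> (w_c4 E' \<noteq> 0 \<and> v (w_c4 E') < 4)"
    and "v (w_disc E') > 0" "w_c4 E' = 0 \<or> v (w_c4 E') > 0"
  shows "additive_reduction v E"
  using assms minimal_model_if_small unfolding additive_reduction_def by blast

lemma v_one_add_mult_of_pos:
  assumes "v_integral v a" "x \<noteq> 0" "v x > 0"
  shows "1 + a * x \<noteq> 0 \<and> v (1 + a * x) = 0"
proof (cases "a = 0")
  case False
  then have "v 1 < v (a * x)"
    using assms by (simp add: v_integral_def v_mult)
  then show ?thesis
    using v_add_eq_left[of 1 "a * x"] False assms(2) by simp
qed simp

lemma v_one_add_mult_of_neg:
  assumes "a \<noteq> 0" "v a = 0" "x \<noteq> 0" "v x < 0"
  shows "v (1 + a * x) = v x"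
  using v_add_eq_left[of "a * x" 1] assms by (simp add: v_mult add.commute)

lemma v_one_add_mult_ge_of_neg:
  assumes "v_integral v a" "x \<noteq> 0" "v x < 0"
  shows "1 + a * x = 0 \<or> v (1 + a * x) \<ge> v x"
proof (cases "a = 0 \<or> 1 + a * x = 0")
  case False
  then have "min (v 1) (v (a * x)) \<le> v (1 + a * x)" "v (a * x) \<ge> v x"
    using v_add_ge_min[of 1 "a * x"] assms by (simp_all add: v_integral_def v_mult)
  then show ?thesis
    using assms(3) v_one by linarith
qed (use assms(3) in auto)

context
  fixes t :: 'a
  assumes t_nonzero: "t \<noteq> 0"
    and disc_factor_nonzero: "1 + 4*t \<noteq> 0"
    and two_unit: "(2::'a) \<noteq> 0" "v 2 = 0"
begin

lemma four_unit: "(4::'a) \<noteq> 0" "v 4 = 0"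
  using two_unit v_mult[of 2 2] mult_eq_0_iff[of "2::'a" 2] by simp_all

lemma sixteen_unit: "(16::'a) \<noteq> 0" "v 16 = 0"
  using four_unit v_mult[of 4 4] mult_eq_0_iff[of "4::'a" 4] by simp_all

lemma v_w_disc_E_curve:
  "w_disc (E_curve t) \<noteq> 0" "v (w_disc (E_curve t)) = 8 * v t + v (1 + 4*t)"
  using t_nonzero disc_factor_nonzero sixteen_unit
  by (simp_all add: w_disc_E_curve v_mult v_power)

lemma v_w_c4_E_curve:
  "w_c4 (E_curve t) = 0 \<longleftrightarrow> 1 + 3*t = 0"
  "1 + 3*t \<noteq> 0 \<Longrightarrow> v (w_c4 (E_curve t)) = 2 * v t + v (1 + 3*t)"
  using t_nonzero sixteen_unit by (simp_all add: w_c4_E_curve v_mult v_power)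

lemma E_curve_rescaled_model:
  assumes "2 * m \<le> v t" "4 * m \<le> 3 * v t"
  obtains E' where "integral_model v (E_curve t) E'"
    "v (w_disc E') = 8 * v t + v (1 + 4*t) - 12 * m"
    "w_c4 E' = 0 \<longleftrightarrow> 1 + 3*t = 0"
    "1 + 3*t \<noteq> 0 \<Longrightarrow> v (w_c4 E') = 2 * v t + v (1 + 3*t) - 4 * m"
proof -
  obtain u where u: "u \<noteq> 0" "v u = m"
    using v_value_exists by blast
  let ?E' = "change_coords (E_curve t) u 0 0 0"
  have "integral_weq v ?E'"
    unfolding change_coords_E_curve_scale integral_weq_def
    using assms t_nonzero u by (simp add: v_integral_def v_divide v_power v_uminus)
  then have "integral_model v (E_curve t) ?E'"
    unfolding integral_model_def using u by blast
  moreover have "v (w_disc ?E') = 8 * v t + v (1 + 4*t) - 12 * m"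
    using v_w_disc_change_coords v_w_disc_E_curve u by simp
  moreover have "w_c4 ?E' = 0 \<longleftrightarrow> 1 + 3*t = 0"
    using v_w_c4_E_curve(1) u by (simp add: w_c4_change_coords)
  moreover have "v (w_c4 ?E') = 2 * v t + v (1 + 3*t) - 4 * m" if "1 + 3*t \<noteq> 0"
    using v_w_c4_change_coords v_w_c4_E_curve u that by simp
  ultimately show ?thesis
    using that by blast
qed

lemma E_curve_factors_pos:
  assumes "v t > 0"
  shows "v (1 + 4*t) = 0" "1 + 3*t \<noteq> 0" "v (1 + 3*t) = 0"
  using v_one_add_mult_of_pos[of 4 t] v_one_add_mult_of_pos[of 3 t] v_integral_numeral
    t_nonzero assms
  by auto

lemma E_curve_factors_neg:
  assumes "v t < 0"
  shows "v (1 + 4*t) = v t" "1 + 3*t = 0 \<or> v (1 + 3*t) \<ge> v t"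
  using v_one_add_mult_of_neg[of 4 t] v_one_add_mult_ge_of_neg[of 3 t] v_integral_numeral
    four_unit t_nonzero assms
  by auto

lemma E_curve_factors_disc_pos:
  assumes "v (1 + 4*t) > 0"
  shows "1 + 3*t \<noteq> 0" "v (1 + 3*t) = 0"
proof -
  have "4 * (1 + 3*t) = 1 + 3 * (1 + 4*t)"
    by (simp add: algebra_simps)
  also have "\<dots> \<noteq> 0 \<and> v \<dots> = 0"
    using v_one_add_mult_of_pos[of 3 "1 + 4*t"] v_integral_numeral disc_factor_nonzero assms
    by blast
  finally have four_times: "4 * (1 + 3*t) \<noteq> 0" "v (4 * (1 + 3*t)) = 0"
    by blast+
  then show nonzero: "1 + 3*t \<noteq> 0"
    by (metis mult_zero_right)
  show "v (1 + 3*t) = 0"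
    using v_mult[OF four_unit(1) nonzero] four_times(2) four_unit(2) by linarith
qed

lemma multiplicative_reduction_E_curve_if_pos_even:
  assumes "v t > 0" "even (v t)"
  shows "multiplicative_reduction v (E_curve t)"
proof -
  obtain m where m: "v t = 2 * m"
    using assms(2) by (rule evenE)
  obtain E' where "integral_model v (E_curve t) E'"
    "v (w_disc E') = 8 * v t + v (1 + 4*t) - 12 * m"
    "w_c4 E' = 0 \<longleftrightarrow> 1 + 3*t = 0"
    "1 + 3*t \<noteq> 0 \<Longrightarrow> v (w_c4 E') = 2 * v t + v (1 + 3*t) - 4 * m"
    by (rule E_curve_rescaled_model[of m]) (use m assms(1) in auto)
  then show ?thesis
    using multiplicative_reduction_if_integral_model v_w_disc_E_curve(1)
      E_curve_factors_pos[OF assms(1)] m assms(1) by auto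
qed

lemma additive_reduction_E_curve_if_pos_odd:
  assumes "v t > 0" "odd (v t)"
  shows "additive_reduction v (E_curve t)" "potentially_multiplicative_reduction v (E_curve t)"
proof -
  obtain m where m: "v t = 2 * m + 1"
    using assms(2) by (rule oddE)
  note factors = E_curve_factors_pos[OF assms(1)]
  obtain E' where "integral_model v (E_curve t) E'"
    "v (w_disc E') = 8 * v t + v (1 + 4*t) - 12 * m"
    "w_c4 E' = 0 \<longleftrightarrow> 1 + 3*t = 0"
    "1 + 3*t \<noteq> 0 \<Longrightarrow> v (w_c4 E') = 2 * v t + v (1 + 3*t) - 4 * m"
    by (rule E_curve_rescaled_model[of m]) (use m assms(1) in auto)
  then show "additive_reduction v (E_curve t)"
    using additive_reduction_if_integral_model v_w_disc_E_curve(1) factors m assms(1) by auto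
  show "potentially_multiplicative_reduction v (E_curve t)"
    unfolding potentially_multiplicative_reduction_def
    using v_w_j v_w_disc_E_curve v_w_c4_E_curve factors assms(1) by auto
qed

lemma good_reduction_E_curve_if_neg:
  assumes "v t < 0" "4 dvd v t"
  shows "good_reduction v (E_curve t)"
proof -
  obtain k where k: "v t = 4 * k"
    using assms(2) by blast
  obtain E' where "integral_model v (E_curve t) E'"
    "v (w_disc E') = 8 * v t + v (1 + 4*t) - 12 * (3 * k)"
    by (rule E_curve_rescaled_model[of "3 * k"]) (use k assms(1) in auto)
  then show ?thesis
    using good_reduction_if_integral_model v_w_disc_E_curve(1)
      E_curve_factors_neg(1)[OF assms(1)] k
    by auto
qed

text \<open>With n = - v(t) not divisible by 4, the scaling exponent e = (3n + 3) div 4 is the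
largest one keeping -t^3/u^4 integral, and 0 < 12 e - 9 n < 12.\<close>

lemma additive_reduction_E_curve_if_neg:
  assumes "v t < 0" "\<not> 4 dvd v t"
  shows "additive_reduction v (E_curve t)" "potentially_good_reduction v (E_curve t)"
proof -
  define n where "n = - v t"
  define e where "e = (3 * n + 3) div 4"
  have n: "n > 0" "\<not> 4 dvd n"
    using assms unfolding n_def by auto
  have e: "n \<le> 2 * e" "3 * n \<le> 4 * e" "0 < 12 * e - 9 * n" "12 * e - 9 * n < 12"
    using n unfolding e_def by presburger+
  note factors = E_curve_factors_neg[OF assms(1)]
  obtain E' where model: "integral_model v (E_curve t) E'"
    and disc: "v (w_disc E') = 8 * v t + v (1 + 4*t) - 12 * (- e)"
    and c4_zero: "w_c4 E' = 0 \<longleftrightarrow> 1 + 3*t = 0"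
    and c4: "1 + 3*t \<noteq> 0 \<Longrightarrow> v (w_c4 E') = 2 * v t + v (1 + 3*t) - 4 * (- e)"
    by (rule E_curve_rescaled_model[of "- e"]) (use e n_def in auto)
  have "w_c4 E' = 0 \<or> v (w_c4 E') > 0"
    using c4_zero c4 factors(2) e n_def by auto
  then show "additive_reduction v (E_curve t)"
    using additive_reduction_if_integral_model[OF v_w_disc_E_curve(1) model]
      disc factors(1) e n_def
    by auto
  show "potentially_good_reduction v (E_curve t)"
    unfolding potentially_good_reduction_def v_integral_def
  proof (cases "1 + 3*t = 0")
    case True
    then show "w_j (E_curve t) = 0 \<or> v (w_j (E_curve t)) \<ge> 0"
      using v_w_c4_E_curve(1) by (simp add: w_j_def)
  next
    case False
    then have "w_c4 (E_curve t) \<noteq> 0" "v (1 + 3*t) \<ge> v t"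
      using v_w_c4_E_curve(1) factors(2) by auto
    then have "v (w_j (E_curve t)) = 3 * v (w_c4 (E_curve t)) - v (w_disc (E_curve t))"
      by (intro v_w_j(2) v_w_disc_E_curve(1))
    then show "w_j (E_curve t) = 0 \<or> v (w_j (E_curve t)) \<ge> 0"
      using v_w_c4_E_curve(2)[OF False] v_w_disc_E_curve(2) factors(1) \<open>v (1 + 3*t) \<ge> v t\<close>
      by linarith
  qed
qed

lemma good_reduction_E_curve_if_unit:
  assumes "v t = 0" "v (1 + 4*t) = 0"
  shows "good_reduction v (E_curve t)"
proof -
  obtain E' where "integral_model v (E_curve t) E'"
    "v (w_disc E') = 8 * v t + v (1 + 4*t) - 12 * 0"
    by (rule E_curve_rescaled_model[of 0]) (use assms(1) in auto)
  then show ?thesis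
    using good_reduction_if_integral_model v_w_disc_E_curve(1) assms by auto
qed

lemma multiplicative_reduction_E_curve_if_unit:
  assumes "v t = 0" "v (1 + 4*t) > 0"
  shows "multiplicative_reduction v (E_curve t)"
proof -
  obtain E' where "integral_model v (E_curve t) E'"
    "v (w_disc E') = 8 * v t + v (1 + 4*t) - 12 * 0"
    "w_c4 E' = 0 \<longleftrightarrow> 1 + 3*t = 0"
    "1 + 3*t \<noteq> 0 \<Longrightarrow> v (w_c4 E') = 2 * v t + v (1 + 3*t) - 4 * 0"
    by (rule E_curve_rescaled_model[of 0]) (use assms(1) in auto)
  then show ?thesis
    using multiplicative_reduction_if_integral_model v_w_disc_E_curve(1)
      E_curve_factors_disc_pos[OF assms(2)] assms by auto
qed

end
end

lemma const_fn_0: "const_fn 0 = 0"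
  by (simp add: const_fn_def)

lemma const_fn_numeral: "const_fn (numeral n) = numeral n"
proof -
  have "to_fract (of_nat m) = of_nat m" for m :: nat
    by (induction m) simp_all
  then show ?thesis
    unfolding const_fn_def numeral_poly[symmetric] by (metis of_nat_numeral)
qed

lemma one_add_const_fn_mult_nonzero:
  assumes "c \<noteq> 0" "t \<notin> range const_fn"
  shows "1 + const_fn c * t \<noteq> 0"
proof
  assume "1 + const_fn c * t = 0"
  then have "const_fn c * t = - 1"
    by (simp add: eq_neg_iff_add_eq_0 add.commute)
  also have "- 1 = const_fn c * const_fn (- inverse c)"
    using assms(1)
    by (simp add: const_fn_def one_pCons flip: to_fract_mult to_fract_uminus to_fract_1)
  finally have "const_fn c * t = const_fn c * const_fn (- inverse c)" .
  then have "t = const_fn (- inverse c)"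
    using assms(1) by (simp add: const_fn_def)
  with assms(2) show False
    by blast
qed

lemma normalized_place_discrete_valuation: "normalized_place v \<Longrightarrow> discrete_valuation v"
  unfolding normalized_place_def discrete_valuation_def by blast

lemma normalized_place_const_fn: "normalized_place v \<Longrightarrow> c \<noteq> 0 \<Longrightarrow> v (const_fn c) = 0"
  unfolding normalized_place_def by blast

theorem theorem2p3:
  fixes t :: "'k::{field, finite} poly fract"
    and v :: "'k poly fract \<Rightarrow> int"
  assumes char: "(2::'k) \<noteq> 0"
    and t_nonconst: "t \<notin> range const_fn"
    and place: "normalized_place v"
  shows
    "(v t > 0 \<and> even (v t) \<longrightarrow> multiplicative_reduction v (E_curve t)) \<and>
     (v t > 0 \<and> odd (v t) \<longrightarrow> additive_reduction v (E_curve t)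
                              \<and> potentially_multiplicative_reduction v (E_curve t)) \<and>
     (v t < 0 \<and> 4 dvd v t \<longrightarrow> good_reduction v (E_curve t)) \<and>
     (v t < 0 \<and> \<not> 4 dvd v t \<longrightarrow> additive_reduction v (E_curve t)
                              \<and> potentially_good_reduction v (E_curve t)) \<and>
     (v t = 0 \<and> v (1 + 4*t) = 0 \<longrightarrow> good_reduction v (E_curve t)) \<and>
     (v t = 0 \<and> v (1 + 4*t) > 0 \<longrightarrow> multiplicative_reduction v (E_curve t))"
proof -
  interpret discrete_valuation v
    using place by (rule normalized_place_discrete_valuation)
  have "(4::'k) \<noteq> 0"
    using char mult_eq_0_iff[of "2::'k" 2] by simp
  then have t: "t \<noteq> 0" "1 + 4*t \<noteq> 0"
    using t_nonconst one_add_const_fn_mult_nonzero[of 4 t]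
    by (metis const_fn_0 rangeI, simp add: const_fn_numeral)
  have two: "(2::'k poly fract) \<noteq> 0" "v 2 = 0"
    using char normalized_place_const_fn[OF place char]
    by (simp_all add: const_fn_def flip: const_fn_numeral)
  show ?thesis
    using multiplicative_reduction_E_curve_if_pos_even[OF t two]
      additive_reduction_E_curve_if_pos_odd[OF t two]
      good_reduction_E_curve_if_neg[OF t two] additive_reduction_E_curve_if_neg[OF t two]
      good_reduction_E_curve_if_unit[OF t two] multiplicative_reduction_E_curve_if_unit[OF t two]
    by blast
qed

end
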